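(* Let $K$ be a field, $m\ge2$, $d_1,\ldots,d_m$ positive integers, $S=K[x_1,\ldots,x_m,y_1,\ldots,y_m]$, $f_{ij}=x_i^{d_i}y_j^{d_j}-x_j^{d_j}y_i^{d_i}$ for $1\le i<j\le m$, $I_2(D)=(f_{ij}:1\le i<j\le m)$ (the ideal of $2$-minors of $\begin{pmatrix}x_1^{d_1}&\cdots&x_m^{d_m}\\ y_1^{d_1}&\cdots&y_m^{d_m}\end{pmatrix}$), and $J_L=(f_{12},f_{13},\ldots,f_{1m})$. Then $J_L=I_2(D)\cap(x_1^{d_1},y_1^{d_1})$. *)

theory Defs
  imports Main "HOL-Library.Poly_Mapping"
begin

(* Multivariate polynomials over a coefficient ring 'a in variables of type 'v:
  finitely supported maps from monomials (exponent vectors 'v \<Rightarrow>\<^sub>0 nat) to coefficients,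
  with the convolution product of HOL-Library.Poly_Mapping. *)

type_synonym ('v, 'a) mpoly = "('v \<Rightarrow>\<^sub>0 nat) \<Rightarrow>\<^sub>0 'a"

definition mvar :: "'v \<Rightarrow> ('v, 'a::comm_ring_1) mpoly" where
  "mvar v = Poly_Mapping.single (Poly_Mapping.single v 1) 1"

text \<open>Variables: (False, i) is x_i and (True, i) is y_i.\<close>

definition xv :: "nat \<Rightarrow> (bool \<times> nat, 'a::comm_ring_1) mpoly" where
  "xv i = mvar (False, i)"

definition yv :: "nat \<Rightarrow> (bool \<times> nat, 'a::comm_ring_1) mpoly" where
  "yv i = mvar (True, i)"

text \<open>The polynomial ring S = K[x_1..x_m, y_1..y_m], as the set of polynomials involving
  only the variables x_i, y_i with 1 \<le> i \<le> m.\<close>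

definition polyring :: "nat \<Rightarrow> (bool \<times> nat, 'a::comm_ring_1) mpoly set" where
  "polyring m = {p. \<forall>\<mu>\<in>Poly_Mapping.keys p. Poly_Mapping.keys \<mu> \<subseteq> UNIV \<times> {1..m}}"

definition ideal_gen :: "'b::comm_ring_1 set \<Rightarrow> 'b set \<Rightarrow> 'b set" where
  "ideal_gen R G = {p. \<exists>F c. finite F \<and> F \<subseteq> G \<and> (\<forall>g\<in>F. c g \<in> R) \<and> p = (\<Sum>g\<in>F. c g * g)}"

definition fmin :: "(nat \<Rightarrow> nat) \<Rightarrow> nat \<Rightarrow> nat \<Rightarrow> (bool \<times> nat, 'a::comm_ring_1) mpoly" where
  "fmin d i j = xv i ^ d i * yv j ^ d j - xv j ^ d j * yv i ^ d i"

end

theory Submission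
  imports Defs
begin

text \<open>Call a monomial standard if its \<open>x\<^sub>1\<close>- and \<open>y\<^sub>1\<close>-degrees are both below \<open>d\<^sub>1\<close>;
  these are exactly the monomials outside the monomial ideal \<open>Q = (x\<^sub>1\<^bsup>d\<^sub>1\<^esup>, y\<^sub>1\<^bsup>d\<^sub>1\<^esup>)\<close>, so
  a nonzero combination of standard monomials never lies in \<open>Q\<close>. The syzygies
  \<open>x\<^sub>1\<^bsup>d\<^sub>1\<^esup> f\<^sub>i\<^sub>j = x\<^sub>i\<^bsup>d\<^sub>i\<^esup> f\<^sub>1\<^sub>j - x\<^sub>j\<^bsup>d\<^sub>j\<^esup> f\<^sub>1\<^sub>i\<close> (and the same with \<open>y\<close>) give \<open>Q I\<^sub>2(D) \<subseteq> J\<^sub>L\<close>.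
  Splitting the coefficient \<open>r\<close> of a generator \<open>f\<^sub>i\<^sub>j\<close>, \<open>2 \<le> i < j\<close>, into its standard part
  \<open>s\<close> and a part in \<open>Q\<close> therefore writes every \<open>g \<in> I\<^sub>2(D)\<close> as \<open>h + T\<close> with \<open>h \<in> J\<^sub>L\<close> and
  \<open>T\<close> a sum of terms \<open>s f\<^sub>i\<^sub>j\<close>, which are combinations of standard monomials because \<open>f\<^sub>i\<^sub>j\<close>
  does not involve \<open>x\<^sub>1, y\<^sub>1\<close>. If also \<open>g \<in> Q\<close>, then \<open>T = g - h \<in> Q\<close>, so \<open>T = 0\<close>.\<close>

section \<open>Ideals generated inside a subring\<close>

locale closed_subring =
  fixes R :: "'b::comm_ring_1 set"
  assumes zero_mem: "0 \<in> R"
    and one_mem: "1 \<in> R"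
    and uminus_mem: "a \<in> R \<Longrightarrow> - a \<in> R"
    and add_mem: "a \<in> R \<Longrightarrow> b \<in> R \<Longrightarrow> a + b \<in> R"
    and mult_mem: "a \<in> R \<Longrightarrow> b \<in> R \<Longrightarrow> a * b \<in> R"
begin

lemma diff_mem: "a \<in> R \<Longrightarrow> b \<in> R \<Longrightarrow> a - b \<in> R"
  using add_mem uminus_mem by (metis diff_conv_add_uminus)

lemma power_mem: "a \<in> R \<Longrightarrow> a ^ n \<in> R"
  by (induction n) (simp_all add: one_mem mult_mem)

end

lemma ideal_gen_induct [consumes 1, case_names zero generator add]:
  assumes "p \<in> ideal_gen R G"
    and "P 0"
    and "\<And>r g. r \<in> R \<Longrightarrow> g \<in> G \<Longrightarrow> P (r * g)"
    and "\<And>p q. P p \<Longrightarrow> P q \<Longrightarrow> P (p + q)"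
  shows "P p"
proof -
  obtain F c where F: "finite F" "F \<subseteq> G" "\<forall>g\<in>F. c g \<in> R" "p = (\<Sum>g\<in>F. c g * g)"
    using assms(1) unfolding ideal_gen_def by blast
  have "F \<subseteq> G \<longrightarrow> (\<forall>g\<in>F. c g \<in> R) \<longrightarrow> P (\<Sum>g\<in>F. c g * g)"
    using F(1) by (induction F rule: finite_induct) (auto intro: assms(2-4))
  then show ?thesis using F by blast
qed

lemma zero_mem_ideal_gen: "0 \<in> ideal_gen R G"
  unfolding ideal_gen_def by (intro CollectI exI[of _ "{}"]) auto

lemma mult_mem_ideal_gen: "r \<in> R \<Longrightarrow> g \<in> G \<Longrightarrow> r * g \<in> ideal_gen R G"
  unfolding ideal_gen_def by (intro CollectI exI[of _ "{g}"] exI[of _ "\<lambda>_. r"]) auto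

lemma ideal_gen_mono: "G \<subseteq> H \<Longrightarrow> ideal_gen R G \<subseteq> ideal_gen R H"
  unfolding ideal_gen_def by blast

context closed_subring
begin

lemma ideal_gen_add:
  assumes "p \<in> ideal_gen R G" and "q \<in> ideal_gen R G"
  shows "p + q \<in> ideal_gen R G"
proof -
  obtain F1 c1 where F1: "finite F1" "F1 \<subseteq> G" "\<forall>g\<in>F1. c1 g \<in> R" "p = (\<Sum>g\<in>F1. c1 g * g)"
    using assms(1) unfolding ideal_gen_def by blast
  obtain F2 c2 where F2: "finite F2" "F2 \<subseteq> G" "\<forall>g\<in>F2. c2 g \<in> R" "q = (\<Sum>g\<in>F2. c2 g * g)"
    using assms(2) unfolding ideal_gen_def by blast
  define c where "c g = (if g \<in> F1 then c1 g else 0) + (if g \<in> F2 then c2 g else 0)" for g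
  have "(\<Sum>g\<in>F1 \<union> F2. c g * g) = (\<Sum>g\<in>F1 \<union> F2. if g \<in> F1 then c1 g * g else 0)
        + (\<Sum>g\<in>F1 \<union> F2. if g \<in> F2 then c2 g * g else 0)"
    by (subst sum.distrib[symmetric]) (rule sum.cong; simp add: c_def distrib_right)
  also have "\<dots> = p + q"
    using F1 F2 by (simp add: sum.If_cases Int_absorb1 Int_absorb2 inf_commute)
  finally have "p + q = (\<Sum>g\<in>F1 \<union> F2. c g * g)" by simp
  moreover have "\<forall>g\<in>F1 \<union> F2. c g \<in> R"
    using F1 F2 by (auto simp: c_def zero_mem add_mem)
  ultimately show ?thesis
    unfolding ideal_gen_def using F1(1,2) F2(1,2)
    by (intro CollectI exI[of _ "F1 \<union> F2"] exI[of _ c]) simp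
qed

lemma ideal_gen_mult:
  assumes "r \<in> R" and "p \<in> ideal_gen R G"
  shows "r * p \<in> ideal_gen R G"
proof -
  obtain F c where F: "finite F" "F \<subseteq> G" "\<forall>g\<in>F. c g \<in> R" "p = (\<Sum>g\<in>F. c g * g)"
    using assms(2) unfolding ideal_gen_def by blast
  then have "r * p = (\<Sum>g\<in>F. (r * c g) * g)"
    by (simp add: sum_distrib_left mult.assoc)
  moreover have "\<forall>g\<in>F. r * c g \<in> R" using F(3) assms(1) by (simp add: mult_mem)
  ultimately show ?thesis
    unfolding ideal_gen_def using F(1,2)
    by (intro CollectI exI[of _ F] exI[of _ "\<lambda>g. r * c g"]) simp
qed

lemma ideal_gen_diff:
  assumes "p \<in> ideal_gen R G" and "q \<in> ideal_gen R G"
  shows "p - q \<in> ideal_gen R G"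
  using ideal_gen_add[OF assms(1) ideal_gen_mult[OF uminus_mem[OF one_mem] assms(2)]] by simp

lemma ideal_gen_subset_ideal_gen:
  assumes "G \<subseteq> ideal_gen R H"
  shows "ideal_gen R G \<subseteq> ideal_gen R H"
proof
  fix p assume "p \<in> ideal_gen R G"
  then show "p \<in> ideal_gen R H"
  proof (induction rule: ideal_gen_induct)
    case zero then show ?case by (rule zero_mem_ideal_gen)
  next
    case (generator r g) then show ?case using assms by (blast intro: ideal_gen_mult)
  next
    case (add p q) then show ?case by (rule ideal_gen_add)
  qed
qed

end

lemma keys_mult_subset:
  fixes p q :: "'m::monoid_add \<Rightarrow>\<^sub>0 'a::semiring_0"
  assumes "Poly_Mapping.keys p \<subseteq> A" and "Poly_Mapping.keys q \<subseteq> B"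
    and "\<And>a b. a \<in> A \<Longrightarrow> b \<in> B \<Longrightarrow> a + b \<in> C"
  shows "Poly_Mapping.keys (p * q) \<subseteq> C"
  using keys_mult[of p q] assms by blast

lemma closed_subring_keys_subset:
  assumes "0 \<in> A" and "\<And>a b. a \<in> A \<Longrightarrow> b \<in> A \<Longrightarrow> a + b \<in> A"
  shows "closed_subring {p :: 'm::comm_monoid_add \<Rightarrow>\<^sub>0 'a::comm_ring_1. Poly_Mapping.keys p \<subseteq> A}"
proof
  fix p q :: "'m \<Rightarrow>\<^sub>0 'a"
  assume p: "p \<in> {p. Poly_Mapping.keys p \<subseteq> A}" and q: "q \<in> {p. Poly_Mapping.keys p \<subseteq> A}"
  show "p + q \<in> {p. Poly_Mapping.keys p \<subseteq> A}" using p q keys_add[of p q] by blast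
  show "p * q \<in> {p. Poly_Mapping.keys p \<subseteq> A}"
    using keys_mult_subset[of p A q A A] p q assms(2) by blast
qed (use assms(1) in auto)

lemma update_eq_add_single:
  "a \<notin> Poly_Mapping.keys f \<Longrightarrow> Poly_Mapping.update a b f = f + Poly_Mapping.single a b"
  by (rule poly_mapping_eqI) (auto simp: lookup_update lookup_add lookup_single in_keys_iff when_def)

lemma keys_subset_induct [consumes 1, case_names zero single add]:
  assumes "Poly_Mapping.keys p \<subseteq> A"
    and "P 0"
    and "\<And>\<mu> c. \<mu> \<in> A \<Longrightarrow> P (Poly_Mapping.single \<mu> c)"
    and "\<And>p q. P p \<Longrightarrow> P q \<Longrightarrow> P (p + q)"
  shows "P p"
proof -
  have "Poly_Mapping.keys p \<subseteq> A \<longrightarrow> P p"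
  proof (induction p rule: update_induct)
    case const then show ?case using assms(2) by simp
  next
    case (update f a b)
    show ?case
    proof
      assume "Poly_Mapping.keys (Poly_Mapping.update a b f) \<subseteq> A"
      then have "a \<in> A" "Poly_Mapping.keys f \<subseteq> A"
        using update.hyps(2) by (auto simp: keys_update)
      then have "P f" "P (Poly_Mapping.single a b)" using update.IH assms(3) by blast+
      then show "P (Poly_Mapping.update a b f)"
        unfolding update_eq_add_single[OF update.hyps(1)] by (rule assms(4))
    qed
  qed
  then show ?thesis using assms(1) by blast
qed

lemma mvar_power:
  "(mvar v :: ('v, 'a::comm_ring_1) mpoly) ^ n = Poly_Mapping.single (Poly_Mapping.single v n) 1"
proof (induction n)
  case (Suc n)
  have "Poly_Mapping.single v 1 + Poly_Mapping.single v n = Poly_Mapping.single v (Suc n)"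
    by (simp add: single_add[symmetric])
  with Suc show ?case by (simp add: mvar_def mult_single)
qed simp

lemma single_eq_mvar_power_mult:
  assumes "n \<le> Poly_Mapping.lookup \<mu> v"
  shows "Poly_Mapping.single \<mu> c
    = (mvar v :: ('v, 'a::comm_ring_1) mpoly) ^ n * Poly_Mapping.single (\<mu> - Poly_Mapping.single v n) c"
proof -
  have "Poly_Mapping.single v n + (\<mu> - Poly_Mapping.single v n) = \<mu>"
    using assms by (intro poly_mapping_eqI) (auto simp: lookup_add lookup_minus lookup_single when_def)
  then show ?thesis by (simp add: mvar_power mult_single)
qed

definition standard_monomials :: "'v \<Rightarrow> 'v \<Rightarrow> nat \<Rightarrow> ('v \<Rightarrow>\<^sub>0 nat) set" where
  "standard_monomials u w n =
     {\<mu>. Poly_Mapping.lookup \<mu> u < n \<and> Poly_Mapping.lookup \<mu> w < n}"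

lemma keys_ideal_gen_powers_disjoint:
  assumes "p \<in> ideal_gen R {mvar u ^ n, mvar w ^ n :: ('v, 'a::comm_ring_1) mpoly}"
  shows "Poly_Mapping.keys p \<inter> standard_monomials u w n = {}"
  using assms
proof (induction rule: ideal_gen_induct)
  case (generator r g)
  then obtain v where v: "v \<in> {u, w}" and g: "g = Poly_Mapping.single (Poly_Mapping.single v n) 1"
    by (auto simp: mvar_power)
  have "Poly_Mapping.keys (r * g) \<subseteq> {\<mu>. n \<le> Poly_Mapping.lookup \<mu> v}"
    by (rule keys_mult_subset[OF subset_refl, of g "{Poly_Mapping.single v n}"])
      (simp_all add: g lookup_add)
  then show ?case using v by (auto simp: standard_monomials_def)
next
  case (add p q) then show ?case using keys_add[of p q] by blast
qed simp

lemma standard_mem_ideal_gen_powers_eq_0: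
  assumes "p \<in> ideal_gen R {mvar u ^ n, mvar w ^ n :: ('v, 'a::comm_ring_1) mpoly}"
    and "Poly_Mapping.keys p \<subseteq> standard_monomials u w n"
  shows "p = 0"
proof -
  have "Poly_Mapping.keys p = {}"
    using keys_ideal_gen_powers_disjoint[OF assms(1)] assms(2) by blast
  then show ?thesis by simp
qed

lemma keys_diff_subset_nat: "Poly_Mapping.keys (\<mu> - \<nu> :: 'v \<Rightarrow>\<^sub>0 nat) \<subseteq> Poly_Mapping.keys \<mu>"
  by (auto simp: in_keys_iff lookup_minus)

lemma polyring_eq_keys_subset:
  "polyring m = {p. Poly_Mapping.keys p \<subseteq> {\<mu>. Poly_Mapping.keys \<mu> \<subseteq> UNIV \<times> {1..m}}}"
  unfolding polyring_def by blast

interpretation polyring: closed_subring "polyring m"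
  unfolding polyring_eq_keys_subset
  by (rule closed_subring_keys_subset) (auto dest: subsetD[OF keys_add])

lemma mvar_mem_polyring: "snd v \<in> {1..m} \<Longrightarrow> mvar v \<in> polyring m"
  unfolding polyring_def mvar_def by (auto simp: mem_Times_iff)

lemma polyring_decompose_powers:
  assumes "p \<in> polyring m"
  shows "\<exists>s a b. p = s + mvar u ^ n * a + mvar w ^ n * b
           \<and> Poly_Mapping.keys s \<subseteq> standard_monomials u w n \<and> a \<in> polyring m \<and> b \<in> polyring m"
proof -
  have "Poly_Mapping.keys p \<subseteq> {\<mu>. Poly_Mapping.keys \<mu> \<subseteq> UNIV \<times> {1..m}}"
    using assms unfolding polyring_eq_keys_subset by blast
  then show ?thesis
  proof (induction rule: keys_subset_induct)
    case zero
    show ?case using polyring.zero_mem by (intro exI[of _ 0]) simp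
  next
    case (single \<mu> c)
    have quotient_mem: "Poly_Mapping.single (\<mu> - Poly_Mapping.single v n) c \<in> polyring m" for v
      using single keys_diff_subset_nat[of \<mu>] by (auto simp: polyring_def)
    consider "\<mu> \<in> standard_monomials u w n"
      | "n \<le> Poly_Mapping.lookup \<mu> u" | "n \<le> Poly_Mapping.lookup \<mu> w"
      unfolding standard_monomials_def mem_Collect_eq by (meson not_le)
    then show ?case
    proof cases
      case 1
      show ?thesis
        by (rule exI[of _ "Poly_Mapping.single \<mu> c"], intro exI[of _ 0])
          (use 1 polyring.zero_mem in simp)
    next
      case 2
      from single_eq_mvar_power_mult[OF this, of c] have eq: "Poly_Mapping.single \<mu> c
          = 0 + mvar u ^ n * Poly_Mapping.single (\<mu> - Poly_Mapping.single u n) c + mvar w ^ n * 0"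
        by simp
      show ?thesis
        by (rule exI[of _ 0], rule exI[of _ "Poly_Mapping.single (\<mu> - Poly_Mapping.single u n) c"],
            rule exI[of _ 0])
          (use eq quotient_mem[of u] polyring.zero_mem in simp)
    next
      case 3
      from single_eq_mvar_power_mult[OF this, of c] have eq: "Poly_Mapping.single \<mu> c
          = 0 + mvar u ^ n * 0 + mvar w ^ n * Poly_Mapping.single (\<mu> - Poly_Mapping.single w n) c"
        by simp
      show ?thesis
        by (rule exI[of _ 0], rule exI[of _ 0],
            rule exI[of _ "Poly_Mapping.single (\<mu> - Poly_Mapping.single w n) c"])
          (use eq quotient_mem[of w] polyring.zero_mem in simp)
    qed
  next
    case (add p q)
    then obtain s a b s' a' b' where
      p: "p = s + mvar u ^ n * a + mvar w ^ n * b" "Poly_Mapping.keys s \<subseteq> standard_monomials u w n"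
      "a \<in> polyring m" "b \<in> polyring m" and
      q: "q = s' + mvar u ^ n * a' + mvar w ^ n * b'" "Poly_Mapping.keys s' \<subseteq> standard_monomials u w n"
      "a' \<in> polyring m" "b' \<in> polyring m"
      by blast
    have "p + q = (s + s') + mvar u ^ n * (a + a') + mvar w ^ n * (b + b')"
      unfolding p(1) q(1) by (simp add: algebra_simps)
    moreover have "Poly_Mapping.keys (s + s') \<subseteq> standard_monomials u w n"
      using p(2) q(2) keys_add[of s s'] by blast
    ultimately show ?case using p(3,4) q(3,4) polyring.add_mem by blast
  qed
qed

lemma keys_mult_standard_monomials:
  assumes "Poly_Mapping.keys s \<subseteq> standard_monomials u w n"
    and "Poly_Mapping.keys q \<subseteq> {\<mu>. Poly_Mapping.lookup \<mu> u = 0 \<and> Poly_Mapping.lookup \<mu> w = 0}"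
  shows "Poly_Mapping.keys (s * q :: ('v, 'a::comm_ring_1) mpoly) \<subseteq> standard_monomials u w n"
proof (rule keys_mult_subset[OF assms])
  fix a b :: "'v \<Rightarrow>\<^sub>0 nat"
  assume "a \<in> standard_monomials u w n"
    and "b \<in> {\<mu>. Poly_Mapping.lookup \<mu> u = 0 \<and> Poly_Mapping.lookup \<mu> w = 0}"
  then show "a + b \<in> standard_monomials u w n" by (simp add: standard_monomials_def lookup_add)
qed

section \<open>The binomials \<open>f\<^sub>i\<^sub>j\<close>\<close>

lemma keys_fmin_x1_y1_free:
  assumes "2 \<le> i" and "2 \<le> j"
  shows "Poly_Mapping.keys (fmin d i j :: (bool \<times> nat, 'a::comm_ring_1) mpoly)
           \<subseteq> {\<mu>. Poly_Mapping.lookup \<mu> (False, 1) = 0 \<and> Poly_Mapping.lookup \<mu> (True, 1) = 0}"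
    (is "_ \<subseteq> ?A")
proof -
  define S where "S = {p :: (bool \<times> nat, 'a) mpoly. Poly_Mapping.keys p \<subseteq> ?A}"
  interpret avoid: closed_subring S
    unfolding S_def by (rule closed_subring_keys_subset) (auto simp: lookup_add)
  have "mvar (b, k) \<in> S" if "2 \<le> k" for b k
    using that by (auto simp: S_def mvar_def lookup_single when_def)
  then have "xv k ^ e \<in> S" "yv k ^ e \<in> S" if "2 \<le> k" for k e
    using that unfolding xv_def yv_def by (simp_all add: avoid.power_mem)
  then have "fmin d i j \<in> S"
    unfolding fmin_def using assms by (intro avoid.diff_mem avoid.mult_mem)
  then show ?thesis by (simp add: S_def)
qed

lemma xv_power_mult_fmin:
  "xv 1 ^ d 1 * fmin d i j = xv i ^ d i * fmin d 1 j - xv j ^ d j * fmin d 1 i"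
  by (simp add: fmin_def algebra_simps)

lemma yv_power_mult_fmin:
  "yv 1 ^ d 1 * fmin d i j = yv i ^ d i * fmin d 1 j - yv j ^ d j * fmin d 1 i"
  by (simp add: fmin_def algebra_simps)

lemma xv_power_mem_polyring: "k \<in> {1..m} \<Longrightarrow> xv k ^ e \<in> polyring m"
  unfolding xv_def by (intro polyring.power_mem mvar_mem_polyring) simp

lemma yv_power_mem_polyring: "k \<in> {1..m} \<Longrightarrow> yv k ^ e \<in> polyring m"
  unfolding yv_def by (intro polyring.power_mem mvar_mem_polyring) simp

lemma fmin_1_mem_ideal_gen_powers:
  assumes "j \<in> {1..m}"
  shows "fmin d 1 j \<in> ideal_gen (polyring m) {xv 1 ^ d 1, yv 1 ^ d 1}"
proof -
  have "fmin d 1 j = yv j ^ d j * xv 1 ^ d 1 - xv j ^ d j * yv 1 ^ d 1"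
    by (simp add: fmin_def algebra_simps)
  also have "\<dots> \<in> ideal_gen (polyring m) {xv 1 ^ d 1, yv 1 ^ d 1}"
    using assms by (intro polyring.ideal_gen_diff mult_mem_ideal_gen xv_power_mem_polyring
        yv_power_mem_polyring) simp_all
  finally show ?thesis .
qed

lemma mult_fmin_reduce:
  fixes r :: "(bool \<times> nat, 'a::comm_ring_1) mpoly" and d :: "nat \<Rightarrow> nat"
  assumes r: "r \<in> polyring m" and ij: "1 \<le> i" "i < j" "j \<le> m"
  defines "J \<equiv> ideal_gen (polyring m) {fmin d 1 k | k. 2 \<le> k \<and> k \<le> m}"
  shows "\<exists>T. r * fmin d i j - T \<in> J
           \<and> Poly_Mapping.keys T \<subseteq> standard_monomials (False, 1) (True, 1) (d 1)"
proof (cases "i = 1")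
  case True
  then have "fmin d i j \<in> {fmin d 1 k | k. 2 \<le> k \<and> k \<le> m}" using ij by auto
  then have "r * fmin d i j \<in> J"
    unfolding J_def by (rule mult_mem_ideal_gen[OF r])
  then show ?thesis by (intro exI[of _ 0]) simp
next
  case False
  obtain s a b where rs: "r = s + xv 1 ^ d 1 * a + yv 1 ^ d 1 * b"
    and s: "Poly_Mapping.keys s \<subseteq> standard_monomials (False, 1) (True, 1) (d 1)"
    and ab: "a \<in> polyring m" "b \<in> polyring m"
    using polyring_decompose_powers[OF r] unfolding xv_def yv_def by blast
  have gens: "fmin d 1 k \<in> {fmin d 1 k | k. 2 \<le> k \<and> k \<le> m}" if "k \<in> {i, j}" for k
    using that ij False by auto
  have ij_mem: "i \<in> {1..m}" "j \<in> {1..m}" using ij by auto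
  have "xv 1 ^ d 1 * fmin d i j \<in> J" "yv 1 ^ d 1 * fmin d i j \<in> J"
    unfolding J_def xv_power_mult_fmin yv_power_mult_fmin
    by (intro polyring.ideal_gen_diff mult_mem_ideal_gen gens xv_power_mem_polyring
        yv_power_mem_polyring ij_mem; simp)+
  then have "a * (xv 1 ^ d 1 * fmin d i j) + b * (yv 1 ^ d 1 * fmin d i j) \<in> J"
    unfolding J_def using ab
    by (intro polyring.ideal_gen_add polyring.ideal_gen_mult[of a] polyring.ideal_gen_mult[of b])
  moreover have "r * fmin d i j - s * fmin d i j
      = a * (xv 1 ^ d 1 * fmin d i j) + b * (yv 1 ^ d 1 * fmin d i j)"
    unfolding rs by (simp add: algebra_simps)
  moreover have "Poly_Mapping.keys (s * fmin d i j) \<subseteq> standard_monomials (False, 1) (True, 1) (d 1)"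
    using s keys_fmin_x1_y1_free[of i j d] ij False by (intro keys_mult_standard_monomials) auto
  ultimately show ?thesis by (intro exI[of _ "s * fmin d i j"]) simp
qed

lemma ideal_minors_reduce:
  fixes g :: "(bool \<times> nat, 'a::comm_ring_1) mpoly" and d :: "nat \<Rightarrow> nat"
  assumes "g \<in> ideal_gen (polyring m) {fmin d i j | i j. 1 \<le> i \<and> i < j \<and> j \<le> m}"
  defines "J \<equiv> ideal_gen (polyring m) {fmin d 1 k | k. 2 \<le> k \<and> k \<le> m}"
  shows "\<exists>T. g - T \<in> J \<and> Poly_Mapping.keys T \<subseteq> standard_monomials (False, 1) (True, 1) (d 1)"
  using assms(1)
proof (induction rule: ideal_gen_induct)
  case zero
  show ?case by (rule exI[of _ 0]) (simp add: J_def zero_mem_ideal_gen)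
next
  case (generator r f)
  then obtain i j where f: "f = fmin d i j" and ij: "1 \<le> i" "i < j" "j \<le> m" by blast
  show ?case unfolding J_def f by (rule mult_fmin_reduce[OF generator(1) ij])
next
  case (add p q)
  then obtain T T'
    where T: "p - T \<in> J" "Poly_Mapping.keys T \<subseteq> standard_monomials (False, 1) (True, 1) (d 1)"
    and T': "q - T' \<in> J" "Poly_Mapping.keys T' \<subseteq> standard_monomials (False, 1) (True, 1) (d 1)"
    by blast
  have "p + q - (T + T') = (p - T) + (q - T')" by simp
  also have "\<dots> \<in> J" using T(1) T'(1) unfolding J_def by (rule polyring.ideal_gen_add)
  finally show ?case using T(2) T'(2) keys_add[of T T'] by blast
qed

theorem proposition4p13:
  fixes m :: nat and d :: "nat \<Rightarrow> nat"
  assumes "m \<ge> 2" and "\<forall>i\<in>{1..m}. d i > 0"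
  shows "ideal_gen (polyring m :: (bool \<times> nat, 'a::field) mpoly set)
            {fmin d 1 j | j. 2 \<le> j \<and> j \<le> m}
       = ideal_gen (polyring m) {fmin d i j | i j. 1 \<le> i \<and> i < j \<and> j \<le> m}
         \<inter> ideal_gen (polyring m) {xv 1 ^ d 1, yv 1 ^ d 1}"
  (is "?J = ?I \<inter> ?Q")
proof
  have "{fmin d 1 j | j. 2 \<le> j \<and> j \<le> m} \<subseteq> {fmin d i j | i j. 1 \<le> i \<and> i < j \<and> j \<le> m}"
    by force
  then have "?J \<subseteq> ?I" by (rule ideal_gen_mono)
  moreover have J_Q: "?J \<subseteq> ?Q"
  proof (rule polyring.ideal_gen_subset_ideal_gen, safe)
    fix j :: nat assume "2 \<le> j" "j \<le> m"
    then show "fmin d 1 j \<in> ?Q" by (intro fmin_1_mem_ideal_gen_powers) simp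
  qed
  ultimately show "?J \<subseteq> ?I \<inter> ?Q" by blast
  show "?I \<inter> ?Q \<subseteq> ?J"
  proof
    fix g assume g: "g \<in> ?I \<inter> ?Q"
    then obtain T where h: "g - T \<in> ?J"
      and T: "Poly_Mapping.keys T \<subseteq> standard_monomials (False, 1) (True, 1) (d 1)"
      using ideal_minors_reduce by blast
    have "g - (g - T) \<in> ?Q" using g h J_Q by (blast intro: polyring.ideal_gen_diff)
    then have "T = 0"
      using T by (intro standard_mem_ideal_gen_powers_eq_0) (simp_all add: xv_def yv_def)
    with h show "g \<in> ?J" by simp
  qed
qed

end
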